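(* Assume the setting in the context, with $\mathcal Y=\mathbb R$ and additive corruption $\tilde Y=Y+Z$. Make the following assumptions. - Conditionally on $X$, the noise $Z$ is independent of $Y$ and has a distribution symmetric about $0$. The distribution of $Z$ may depend on $X$. - For every $x$, the conditional distribution of $Y\mid X=x$ has a density that is symmetric about some point and unimodal. - For every $x\in\mathcal X$, the set $\widehat{\mathcal C}_{\rm noisy}(x)$ is an interval that contains the median of $\tilde Y\mid X=x$. Then $\mathbb{P}\big(Y_{\rm test}\in\widehat{\mathcal C}_{\rm noisy}(X_{\rm test})\big)\ge 1-\alpha$.
   Context: Setting (conformal prediction with noisy labels). Let $(X_1,Y_1,U_1),\dots,(X_n,Y_n,U_n),(X_{\rm test},Y_{\rm test},U_{\rm test})$ be i.i.d. triples, with $U\sim\mathrm{Unif}[0,1]$ independent of $(X,Y)$. Noisy labels are $\tilde Y_i=g(Y_i,U_i)$ and $\tilde Y_{\rm test}=g(Y_{\rm test},U_{\rm test})$ for a corruption function $g$. Here the corruption is additive: $\tilde Y=Y+Z$, where the noise $Z$ is generated from $U$ (and possibly $X$). Fix a data-independent score $s:\mathcal X\times\mathcal Y\to\mathbb R$ and a level $\alpha\in(0,1)$. Let $\hat q_{\rm noisy}$ be the $\lceil (n+1)(1-\alpha)\rceil$-th smallest of $s(X_i,\tilde Y_i)$, $i=1,\dots,n$, with $\hat q_{\rm noisy}=+\infty$ if this index exceeds $n$. Set $\widehat{\mathcal C}_{\rm noisy}(x)=\{y: s(x,y)\le\hat q_{\rm noisy}\}$. Probabilities are joint over all data and corruption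 randomness. *)

theory Defs
  imports "HOL-Probability.Probability"
begin

definition unifU :: "real measure" where
  "unifU = uniform_measure lborel {0..1}"

definition XY_law :: "'a measure \<Rightarrow> ('a \<Rightarrow> real \<Rightarrow> real) \<Rightarrow> ('a \<times> real) measure" where
  "XY_law mu f = density (mu \<Otimes>\<^sub>M lborel) (\<lambda>(x,y). ennreal (f x y))"

definition triple_law :: "'a measure \<Rightarrow> ('a \<Rightarrow> real \<Rightarrow> real) \<Rightarrow> (('a \<times> real) \<times> real) measure" where
  "triple_law mu f = XY_law mu f \<Otimes>\<^sub>M unifU"

text \<open>Joint law of the n calibration triples (indices 0..n-1) and the test triple (index n), i.i.d.\<close>
definition data_law :: "nat \<Rightarrow> 'a measure \<Rightarrow> ('a \<Rightarrow> real \<Rightarrow> real)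
    \<Rightarrow> (nat \<Rightarrow> ('a \<times> real) \<times> real) measure" where
  "data_law n mu f = PiM {..n} (\<lambda>_. triple_law mu f)"

definition Xof :: "(nat \<Rightarrow> ('a \<times> real) \<times> real) \<Rightarrow> nat \<Rightarrow> 'a" where
  "Xof \<omega> i = fst (fst (\<omega> i))"
definition Yof :: "(nat \<Rightarrow> ('a \<times> real) \<times> real) \<Rightarrow> nat \<Rightarrow> real" where
  "Yof \<omega> i = snd (fst (\<omega> i))"
definition Uof :: "(nat \<Rightarrow> ('a \<times> real) \<times> real) \<Rightarrow> nat \<Rightarrow> real" where
  "Uof \<omega> i = snd (\<omega> i)"

text \<open>Additive corruption: noisy label Y + Z with Z = h X U.\<close>
definition Ytil :: "('a \<Rightarrow> real \<Rightarrow> real) \<Rightarrow> (nat \<Rightarrow> ('a \<times> real) \<times> real) \<Rightarrow> nat \<Rightarrow> real" where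
  "Ytil h \<omega> i = Yof \<omega> i + h (Xof \<omega> i) (Uof \<omega> i)"

definition conf_quantile :: "nat \<Rightarrow> real \<Rightarrow> (nat \<Rightarrow> real) \<Rightarrow> ereal" where
  "conf_quantile n \<alpha> v =
     (let k = nat \<lceil>(real n + 1) * (1 - \<alpha>)\<rceil>
      in if k > n then \<infinity> else ereal (sort (map v [0..<n]) ! (k - 1)))"

definition q_noisy :: "nat \<Rightarrow> real \<Rightarrow> ('a \<Rightarrow> real \<Rightarrow> real) \<Rightarrow> ('a \<Rightarrow> real \<Rightarrow> real)
    \<Rightarrow> (nat \<Rightarrow> ('a \<times> real) \<times> real) \<Rightarrow> ereal" where
  "q_noisy n \<alpha> s h \<omega> = conf_quantile n \<alpha> (\<lambda>i. s (Xof \<omega> i) (Ytil h \<omega> i))"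

definition C_noisy :: "nat \<Rightarrow> real \<Rightarrow> ('a \<Rightarrow> real \<Rightarrow> real) \<Rightarrow> ('a \<Rightarrow> real \<Rightarrow> real)
    \<Rightarrow> (nat \<Rightarrow> ('a \<times> real) \<times> real) \<Rightarrow> 'a \<Rightarrow> real set" where
  "C_noisy n \<alpha> s h \<omega> x = {y. ereal (s x y) \<le> q_noisy n \<alpha> s h \<omega>}"

definition noisy_cond_law :: "('a \<Rightarrow> real \<Rightarrow> real) \<Rightarrow> ('a \<Rightarrow> real \<Rightarrow> real) \<Rightarrow> 'a \<Rightarrow> real measure" where
  "noisy_cond_law f h x =
     distr (density lborel (\<lambda>y. ennreal (f x y)) \<Otimes>\<^sub>M unifU) borel (\<lambda>(y,u). y + h x u)"

definition is_median :: "real measure \<Rightarrow> real \<Rightarrow> bool" where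
  "is_median M t \<longleftrightarrow> measure M {..t} \<ge> 1/2 \<and> measure M {t..} \<ge> 1/2"

definition sym_unimodal :: "(real \<Rightarrow> real) \<Rightarrow> bool" where
  "sym_unimodal g \<longleftrightarrow> (\<exists>m. (\<forall>t. g (m + t) = g (m - t)) \<and> mono_on {..m} g \<and> antimono_on {m..} g)"

end

theory Submission
  imports Defs
begin

(* The noisy scores s(X_i, Y_i + Z_i) of the n + 1 triples are exchangeable, so the usual
   split-conformal argument gives P(Y~_test in C(X_test)) >= 1 - alpha. Conditionally on the
   calibration sample, C(x) is a fixed interval containing the median of Y~ | X = x, which is the
   centre m of the symmetric unimodal density of Y | X = x. For such an interval I one has
   P(Y + z in I) + P(Y - z in I) <= 2 P(Y in I): splitting I and its mirror image I' about m into
   the symmetric intervals I Int I' and I Un I' reduces this to Anderson's inequality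
   P(Y + z in K) <= P(Y in K) for intervals K symmetric about m. Averaging over the symmetric
   noise Z yields P(Y + Z in C(x)) <= P(Y in C(x)), so the clean label is covered at least as
   often as the noisy one. *)

section \<open>Symmetric unimodal densities under symmetric noise\<close>

definition shift_mass :: "(real \<Rightarrow> real) \<Rightarrow> real set \<Rightarrow> real \<Rightarrow> ennreal" where
  "shift_mass g K z = (\<integral>\<^sup>+y. ennreal (g y) * indicator K (y + z) \<partial>lborel)"

lemma nn_integral_lborel_reflect:
  fixes F :: "real \<Rightarrow> ennreal"
  assumes "F \<in> borel_measurable borel"
  shows "(\<integral>\<^sup>+y. F y \<partial>lborel) = (\<integral>\<^sup>+y. F (c - y) \<partial>lborel)"
  using nn_integral_real_affine[OF assms, of "-1" c] by simp

lemma borel_measurable_shift_mass: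
  assumes [measurable]: "g \<in> borel_measurable borel" "K \<in> sets borel"
  shows "shift_mass g K \<in> borel_measurable borel"
proof -
  have "(\<lambda>(z, y). ennreal (g y) * indicator K (y + z)) \<in> borel_measurable (borel \<Otimes>\<^sub>M lborel)"
    by measurable
  then show ?thesis
    unfolding shift_mass_def by (rule lborel.borel_measurable_nn_integral[simplified])
qed

lemma shift_mass_Int_Un:
  assumes [measurable]: "g \<in> borel_measurable borel" "A \<in> sets borel" "B \<in> sets borel"
  shows "shift_mass g A z + shift_mass g B z = shift_mass g (A \<inter> B) z + shift_mass g (A \<union> B) z"
  unfolding shift_mass_def
  by (subst (1 2) nn_integral_add[symmetric]) (auto intro!: nn_integral_cong simp: indicator_def)

lemma nn_integral_comp_eq_of_distr_eq:
  assumes "H \<in> measurable M N" "H' \<in> measurable M N" "distr M N H = distr M N H'"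
    and "\<Phi> \<in> borel_measurable N"
  shows "(\<integral>\<^sup>+u. \<Phi> (H u) \<partial>M) = (\<integral>\<^sup>+u. \<Phi> (H' u) \<partial>M)"
proof -
  have "(\<integral>\<^sup>+u. \<Phi> (H u) \<partial>M) = (\<integral>\<^sup>+x. \<Phi> x \<partial>distr M N H)"
    by (rule nn_integral_distr[symmetric]) (use assms in simp_all)
  also have "\<dots> = (\<integral>\<^sup>+x. \<Phi> x \<partial>distr M N H')"
    by (simp only: assms(3))
  also have "\<dots> = (\<integral>\<^sup>+u. \<Phi> (H' u) \<partial>M)"
    by (rule nn_integral_distr) (use assms in simp_all)
  finally show ?thesis .
qed

lemma prob_space_density_lborel:
  assumes "g \<in> borel_measurable borel" "(\<integral>\<^sup>+y. ennreal (g y) \<partial>lborel) = 1"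
  shows "prob_space (density lborel (\<lambda>y. ennreal (g y)))"
  using assms by (intro prob_spaceI) (simp add: emeasure_density)

lemma emeasure_distr_add_noise:
  assumes [measurable]: "g \<in> borel_measurable borel" "H \<in> borel_measurable M" "S \<in> sets borel"
    and "prob_space M" "(\<integral>\<^sup>+y. ennreal (g y) \<partial>lborel) = 1"
  shows "emeasure (distr (density lborel (\<lambda>y. ennreal (g y)) \<Otimes>\<^sub>M M) borel (\<lambda>(y,u). y + H u)) S
    = (\<integral>\<^sup>+u. shift_mass g S (H u) \<partial>M)"
proof -
  let ?D = "density lborel (\<lambda>y. ennreal (g y))"
  interpret D: prob_space ?D by (rule prob_space_density_lborel) fact+
  interpret M: prob_space M by fact
  interpret pair_sigma_finite ?D M by unfold_locales
  have "emeasure (distr (?D \<Otimes>\<^sub>M M) borel (\<lambda>(y,u). y + H u)) S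
      = (\<integral>\<^sup>+z. indicator S z \<partial>distr (?D \<Otimes>\<^sub>M M) borel (\<lambda>(y,u). y + H u))"
    by simp
  also have "\<dots> = (\<integral>\<^sup>+p. indicator S ((\<lambda>(y,u). y + H u) p) \<partial>(?D \<Otimes>\<^sub>M M))"
    by (rule nn_integral_distr) measurable
  also have "\<dots> = (\<integral>\<^sup>+u. (\<integral>\<^sup>+y. indicator S (y + H u) \<partial>?D) \<partial>M)"
    by (subst nn_integral_snd[symmetric]) (auto simp: case_prod_beta)
  also have "\<dots> = (\<integral>\<^sup>+u. shift_mass g S (H u) \<partial>M)"
    by (intro nn_integral_cong) (simp add: shift_mass_def nn_integral_density)
  finally show ?thesis .
qed

locale symmetric_density =
  fixes g :: "real \<Rightarrow> real" and m :: real
  assumes g_meas [measurable]: "g \<in> borel_measurable borel"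
    and g_sym: "\<And>t. g (m + t) = g (m - t)"
begin

lemma g_reflect [simp]: "g (2*m - y) = g y"
  using g_sym[of "m - y"] by (simp add: algebra_simps)

lemma shift_mass_reflect:
  assumes [measurable]: "K \<in> sets borel"
  shows "shift_mass g K (- z) = shift_mass g {y. 2*m - y \<in> K} z"
proof -
  have "shift_mass g K (- z) = (\<integral>\<^sup>+y. ennreal (g (2*m - y)) * indicator K (2*m - y + - z) \<partial>lborel)"
    unfolding shift_mass_def
    by (rule nn_integral_lborel_reflect[where F = "\<lambda>y. ennreal (g y) * indicator K (y + - z)"]) measurable
  also have "\<dots> = shift_mass g {y. 2*m - y \<in> K} z"
    unfolding shift_mass_def by (simp add: indicator_def diff_diff_eq)
  finally show ?thesis .
qed

lemma is_median_add_symmetric_noise: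
  assumes M: "prob_space M" and [measurable]: "H \<in> borel_measurable M"
    and H_sym: "distr M borel H = distr M borel (\<lambda>u. - H u)"
    and g_int: "(\<integral>\<^sup>+y. ennreal (g y) \<partial>lborel) = 1"
  shows "is_median (distr (density lborel (\<lambda>y. ennreal (g y)) \<Otimes>\<^sub>M M) borel (\<lambda>(y,u). y + H u)) m"
proof -
  let ?N = "distr (density lborel (\<lambda>y. ennreal (g y)) \<Otimes>\<^sub>M M) borel (\<lambda>(y,u). y + H u)"
  interpret N: prob_space ?N
    by (intro prob_space.prob_space_distr prob_space_pair prob_space_density_lborel M g_int) measurable
  have "emeasure ?N {..m} = (\<integral>\<^sup>+u. shift_mass g {..m} (H u) \<partial>M)"
    by (rule emeasure_distr_add_noise) (use M g_int in auto)
  also have "\<dots> = (\<integral>\<^sup>+u. shift_mass g {m..} (- H u) \<partial>M)"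
    by (simp add: shift_mass_reflect atMost_def)
  also have "\<dots> = (\<integral>\<^sup>+u. shift_mass g {m..} (H u) \<partial>M)"
    by (rule nn_integral_comp_eq_of_distr_eq[OF _ _ H_sym[symmetric]]) (auto intro: borel_measurable_shift_mass)
  also have "\<dots> = emeasure ?N {m..}"
    by (rule emeasure_distr_add_noise[symmetric]) (use M g_int in auto)
  finally have halves: "measure ?N {..m} = measure ?N {m..}"
    by (simp add: N.emeasure_eq_measure)
  have "{..m} \<union> {m..} = UNIV" by auto
  then have "1 \<le> measure ?N {..m} + measure ?N {m..}"
    using N.prob_space measure_Un_le[of "{..m}" ?N "{m..}"] by simp
  then show ?thesis unfolding is_median_def using halves by simp
qed

end

locale symmetric_unimodal_density = symmetric_density +
  assumes g_mono: "mono_on {..m} g"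
begin

lemma g_le_mirror_of_shift_into:
  assumes K: "is_interval K" "\<And>y. y \<in> K \<longleftrightarrow> 2*m - y \<in> K"
    and z: "0 \<le> z" and y: "y + z \<in> K" "y \<notin> K"
  shows "g y \<le> g (2*m - z - y)"
proof -
  have K_between: "x \<in> K" if "a \<in> K" "b \<in> K" "a \<le> x" "x \<le> b" for a b x
    using K(1) that unfolding is_interval_1 by blast
  have mirror: "2*m - (y + z) \<in> K" using y(1) K(2) by blast
  have "m \<in> K"
    by (cases "y + z \<le> m") (auto intro: K_between[OF y(1) mirror] K_between[OF mirror y(1)])
  then have "y < m" using K_between[OF \<open>m \<in> K\<close> y(1), of y] y z by force
  show ?thesis
  proof (cases "y + z \<le> m")
    case True
    then have "g y \<le> g (y + z)" using g_mono \<open>y < m\<close> z unfolding mono_on_def by auto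
    then show ?thesis using g_reflect[of "y + z"] by (simp add: algebra_simps)
  next
    case False
    have "y \<le> 2*m - z - y"
      using K_between[OF mirror \<open>m \<in> K\<close>, of y] y(2) \<open>y < m\<close> by force
    then show ?thesis using g_mono False unfolding mono_on_def by auto
  qed
qed

(* The reflection y \<mapsto> 2m - z - y maps the points moved into K by the shift onto the points
   moved out of K, and the density is larger at the latter. *)
lemma shift_mass_symmetric_interval_le_of_nonneg:
  assumes K: "K \<in> sets borel" "is_interval K" "\<And>y. y \<in> K \<longleftrightarrow> 2*m - y \<in> K" and z: "0 \<le> z"
  shows "shift_mass g K z \<le> shift_mass g K 0"
proof -
  note [measurable] = K(1)
  define stay where "stay = (\<integral>\<^sup>+y. ennreal (g y) * indicator K (y + z) * indicator K y \<partial>lborel)"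
  define enter where "enter = (\<integral>\<^sup>+y. ennreal (g y) * indicator K (y + z) * indicator (- K) y \<partial>lborel)"
  define leave where "leave = (\<integral>\<^sup>+y. ennreal (g y) * indicator K y * indicator (- K) (y + z) \<partial>lborel)"
  have "shift_mass g K z = stay + enter"
    unfolding shift_mass_def stay_def enter_def
    by (subst nn_integral_add[symmetric]) (auto intro!: nn_integral_cong simp: indicator_def)
  moreover have "shift_mass g K 0 = stay + leave"
    unfolding shift_mass_def stay_def leave_def
    by (subst nn_integral_add[symmetric]) (auto intro!: nn_integral_cong simp: indicator_def)
  moreover have "enter \<le> leave"
  proof -
    have "enter \<le> (\<integral>\<^sup>+y. ennreal (g (2*m - z - y)) * indicator K (y + z) * indicator (- K) y \<partial>lborel)"
      unfolding enter_def
      by (intro nn_integral_mono) (auto simp: indicator_def intro!: ennreal_leI g_le_mirror_of_shift_into[OF K(2,3) z])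
    also have "\<dots> = leave"
    proof -
      have "leave = (\<integral>\<^sup>+y. ennreal (g (2*m - z - y)) * indicator K (2*m - z - y) * indicator (- K) (2*m - z - y + z) \<partial>lborel)"
        unfolding leave_def
        by (rule nn_integral_lborel_reflect[where F = "\<lambda>y. ennreal (g y) * indicator K y * indicator (- K) (y + z)"]) measurable
      also have "\<dots> = (\<integral>\<^sup>+y. ennreal (g (2*m - z - y)) * indicator K (y + z) * indicator (- K) y \<partial>lborel)"
      proof (intro nn_integral_cong)
        fix y
        have e: "2*m - z - y = 2*m - (y + z)" "2*m - z - y + z = 2*m - y" by simp_all
        show "ennreal (g (2*m - z - y)) * indicator K (2*m - z - y) * indicator (- K) (2*m - z - y + z)
            = ennreal (g (2*m - z - y)) * indicator K (y + z) * indicator (- K) y"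
          using K(3)[of "y + z"] K(3)[of y] unfolding e by (simp add: indicator_def)
      qed
      finally show ?thesis ..
    qed
    finally show ?thesis .
  qed
  ultimately show ?thesis by (simp add: add_left_mono)
qed

lemma shift_mass_symmetric_interval_le:
  assumes K: "K \<in> sets borel" "is_interval K" "\<And>y. y \<in> K \<longleftrightarrow> 2*m - y \<in> K"
  shows "shift_mass g K z \<le> shift_mass g K 0"
proof (cases "0 \<le> z")
  case True
  then show ?thesis by (rule shift_mass_symmetric_interval_le_of_nonneg[OF K])
next
  case False
  have "{y. 2*m - y \<in> K} = K" using K(3) by blast
  then have "shift_mass g K z = shift_mass g K (- z)"
    using shift_mass_reflect[OF K(1), of "- z"] by simp
  also have "\<dots> \<le> shift_mass g K 0"
    using False by (intro shift_mass_symmetric_interval_le_of_nonneg[OF K]) simp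
  finally show ?thesis .
qed

lemma shift_mass_interval_pair_le:
  assumes I: "I \<in> sets borel" "is_interval I" "m \<in> I"
  shows "shift_mass g I z + shift_mass g I (- z) \<le> 2 * shift_mass g I 0"
proof -
  define J where "J = {y. 2*m - y \<in> I}"
  have [measurable]: "I \<in> sets borel" "J \<in> sets borel" using I(1) by (auto simp: J_def)
  have "J = (-) (2*m) ` I" unfolding J_def by force
  then have "is_interval J" using I(2) by simp
  have "m \<in> J" using I(3) by (simp add: J_def)
  have sym_Int: "y \<in> I \<inter> J \<longleftrightarrow> 2*m - y \<in> I \<inter> J" and sym_Un: "y \<in> I \<union> J \<longleftrightarrow> 2*m - y \<in> I \<union> J" for y
    by (auto simp: J_def)
  have "is_interval (I \<inter> J)" using I(2) \<open>is_interval J\<close> by (rule is_interval_Int)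
  have "is_interval (I \<union> J)"
    using I(2,3) \<open>is_interval J\<close> \<open>m \<in> J\<close> by (auto simp: is_interval_connected_1 intro: connected_Un)
  have "shift_mass g I z + shift_mass g I (- z) = shift_mass g I z + shift_mass g J z"
    by (simp add: shift_mass_reflect J_def)
  also have "\<dots> = shift_mass g (I \<inter> J) z + shift_mass g (I \<union> J) z"
    by (rule shift_mass_Int_Un) measurable
  also have "\<dots> \<le> shift_mass g (I \<inter> J) 0 + shift_mass g (I \<union> J) 0"
    by (intro add_mono shift_mass_symmetric_interval_le sym_Int sym_Un \<open>is_interval (I \<inter> J)\<close>
        \<open>is_interval (I \<union> J)\<close>) measurable
  also have "\<dots> = shift_mass g I 0 + shift_mass g J 0"
    by (rule shift_mass_Int_Un[symmetric]) measurable
  also have "shift_mass g J 0 = shift_mass g I 0"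
    using shift_mass_reflect[OF I(1), of 0] by (simp add: J_def)
  finally show ?thesis by (simp add: mult_2)
qed

lemma nn_integral_shift_mass_symmetric_noise_le:
  assumes M: "prob_space M" and [measurable]: "H \<in> borel_measurable M"
    and H_sym: "distr M borel H = distr M borel (\<lambda>u. - H u)"
    and I: "I \<in> sets borel" "is_interval I" "m \<in> I"
  shows "(\<integral>\<^sup>+u. shift_mass g I (H u) \<partial>M) \<le> shift_mass g I 0"
proof -
  interpret M: prob_space M by (rule M)
  have [measurable]: "shift_mass g I \<in> borel_measurable borel"
    using I(1) by (rule borel_measurable_shift_mass[OF g_meas])
  have "2 * (\<integral>\<^sup>+u. shift_mass g I (H u) \<partial>M)
      = (\<integral>\<^sup>+u. shift_mass g I (H u) \<partial>M) + (\<integral>\<^sup>+u. shift_mass g I (- H u) \<partial>M)"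
    using nn_integral_comp_eq_of_distr_eq[OF _ _ H_sym] by (simp add: mult_2)
  also have "\<dots> = (\<integral>\<^sup>+u. shift_mass g I (H u) + shift_mass g I (- H u) \<partial>M)"
    by (rule nn_integral_add[symmetric]) measurable
  also have "\<dots> \<le> (\<integral>\<^sup>+u. 2 * shift_mass g I 0 \<partial>M)"
    by (intro nn_integral_mono shift_mass_interval_pair_le I)
  also have "\<dots> = 2 * shift_mass g I 0"
    by (simp add: M.emeasure_space_1)
  finally show ?thesis
    by (subst (asm) ennreal_mult_le_mult_iff) auto
qed


lemma nn_integral_add_symmetric_noise_le:
  assumes M: "prob_space M" and [measurable]: "H \<in> borel_measurable M"
    and H_sym: "distr M borel H = distr M borel (\<lambda>u. - H u)"
    and I: "I \<in> sets borel" "is_interval I" "m \<in> I"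
  shows "(\<integral>\<^sup>+y. ennreal (g y) * (\<integral>\<^sup>+u. indicator I (y + H u) \<partial>M) \<partial>lborel)
    \<le> (\<integral>\<^sup>+y. ennreal (g y) * indicator I y \<partial>lborel)"
proof -
  interpret M: prob_space M by (rule M)
  interpret pair_sigma_finite lborel M by unfold_locales
  note [measurable] = I(1)
  have "(\<integral>\<^sup>+y. ennreal (g y) * (\<integral>\<^sup>+u. indicator I (y + H u) \<partial>M) \<partial>lborel)
      = (\<integral>\<^sup>+y. (\<integral>\<^sup>+u. ennreal (g y) * indicator I (y + H u) \<partial>M) \<partial>lborel)"
    by (intro nn_integral_cong nn_integral_cmult[symmetric]) measurable
  also have "\<dots> = (\<integral>\<^sup>+u. shift_mass g I (H u) \<partial>M)"
    unfolding shift_mass_def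
    by (rule Fubini'[where f = "\<lambda>y u. ennreal (g y) * indicator I (y + H u)", symmetric])
      measurable
  also have "\<dots> \<le> shift_mass g I 0"
    by (rule nn_integral_shift_mass_symmetric_noise_le[OF M _ H_sym I]) measurable
  finally show ?thesis by (simp add: shift_mass_def)
qed

end

section \<open>Split conformal coverage\<close>

lemma sorted_nth_less_iff_card:
  fixes V :: "nat \<Rightarrow> real"
  assumes k: "1 \<le> k" "k \<le> n"
  shows "sort (map V [0..<n]) ! (k - 1) < v \<longleftrightarrow> k \<le> card {j. j < n \<and> V j < v}"
proof -
  define xs where "xs = sort (map V [0..<n])"
  have len: "length xs = n" and sorted: "sorted xs" by (simp_all add: xs_def)
  have "{i. i < n \<and> map V [0..<n] ! i < v} = {j. j < n \<and> V j < v}" by auto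
  then have "card {j. j < n \<and> V j < v} = length (filter (\<lambda>a. a < v) (map V [0..<n]))"
    by (simp add: length_filter_conv_card)
  also have "\<dots> = length (filter (\<lambda>a. a < v) xs)"
    by (metis xs_def mset_filter mset_sort size_mset)
  also have "\<dots> = card {i. i < n \<and> xs ! i < v}"
    by (simp add: length_filter_conv_card len)
  finally have count: "card {j. j < n \<and> V j < v} = card {i. i < n \<and> xs ! i < v}" .
  show ?thesis
  proof
    assume lt: "sort (map V [0..<n]) ! (k - 1) < v"
    have "xs ! i < v" if "i < k" for i
    proof -
      have "xs ! i \<le> xs ! (k - 1)" using that k len by (intro sorted_nth_mono[OF sorted]) auto
      then show ?thesis using lt by (simp add: xs_def)
    qed
    then have "{0..<k} \<subseteq> {i. i < n \<and> xs ! i < v}" using k by auto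
    from card_mono[OF _ this] show "k \<le> card {j. j < n \<and> V j < v}" by (simp add: count)
  next
    assume k_le: "k \<le> card {j. j < n \<and> V j < v}"
    show "sort (map V [0..<n]) ! (k - 1) < v"
    proof (rule ccontr)
      assume "\<not> ?thesis"
      then have v_le: "v \<le> xs ! (k - 1)" by (simp add: xs_def)
      have "i < k - 1" if "i < n" "xs ! i < v" for i
      proof (rule ccontr)
        assume "\<not> i < k - 1"
        then have "xs ! (k - 1) \<le> xs ! i" using that(1) len by (intro sorted_nth_mono[OF sorted]) auto
        then show False using v_le that(2) by simp
      qed
      then have "{i. i < n \<and> xs ! i < v} \<subseteq> {0..<k - 1}" by auto
      from card_mono[OF _ this] show False using k_le k by (simp add: count)
    qed
  qed
qed

lemma le_conf_quantile_iff:
  assumes k: "k = nat \<lceil>(real n + 1) * (1 - \<alpha>)\<rceil>" and "k \<le> n" "\<alpha> < 1"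
  shows "ereal v \<le> conf_quantile n \<alpha> V \<longleftrightarrow> card {j. j < n \<and> V j < v} < k"
proof -
  have "0 < (real n + 1) * (1 - \<alpha>)" using \<open>\<alpha> < 1\<close> by simp
  then have "1 \<le> k" unfolding k by linarith
  moreover have "conf_quantile n \<alpha> V = ereal (sort (map V [0..<n]) ! (k - 1))"
    using \<open>k \<le> n\<close> by (simp add: conf_quantile_def Let_def flip: k)
  ultimately show ?thesis
    using sorted_nth_less_iff_card[of k n V v] \<open>k \<le> n\<close> by auto
qed

lemma conf_quantile_eq_infinity:
  assumes "k = nat \<lceil>(real n + 1) * (1 - \<alpha>)\<rceil>" "n < k"
  shows "conf_quantile n \<alpha> V = \<infinity>"
  using assms by (simp add: conf_quantile_def Let_def)

lemma card_rank_ge_add_le: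
  fixes V :: "nat \<Rightarrow> real"
  assumes I: "finite I" and k: "k \<le> card I"
  shows "card {i\<in>I. k \<le> card {j\<in>I. V j < V i}} + k \<le> card I"
proof -
  define A where "A = {i\<in>I. k \<le> card {j\<in>I. V j < V i}}"
  show ?thesis
  proof (cases "A = {}")
    case True
    then show ?thesis using k unfolding A_def[symmetric] by simp
  next
    case False
    moreover have "finite A" using I by (simp add: A_def)
    ultimately obtain i0 where i0: "i0 \<in> A" "\<And>i. i \<in> A \<Longrightarrow> V i0 \<le> V i"
      by (metis arg_min_if_finite(1) arg_min_least)
    define L where "L = {j\<in>I. V j < V i0}"
    have "k \<le> card L" using i0(1) by (simp add: A_def L_def)
    moreover have "A \<inter> L = {}" using i0(2) by (auto simp: L_def not_less[symmetric])
    then have "card A + card L = card (A \<union> L)"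
      using I by (intro card_Un_disjoint[symmetric]) (auto simp: A_def L_def)
    moreover have "card (A \<union> L) \<le> card I"
      using I by (intro card_mono) (auto simp: A_def L_def)
    ultimately show ?thesis unfolding A_def by linarith
  qed
qed

lemma borel_measurable_card_Collect:
  assumes "finite A" "\<And>j. j \<in> A \<Longrightarrow> Measurable.pred M (P j)"
  shows "(\<lambda>\<omega>. real (card {j\<in>A. P j \<omega>})) \<in> borel_measurable M"
proof -
  have "real (card {j\<in>A. P j \<omega>}) = (\<Sum>j\<in>A. of_bool (P j \<omega>))" for \<omega>
    using assms(1) by (simp add: Int_def conj_commute)
  moreover have "(\<lambda>\<omega>. \<Sum>j\<in>A. of_bool (P j \<omega>) :: real) \<in> borel_measurable M"
    using assms(2) by measurable
  ultimately show ?thesis by simp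
qed

(* Swapping coordinates i and n preserves the product measure, so the n + 1 events
   "coordinate i has rank at least k" are equally likely; at most n + 1 - k of them occur at once. *)
lemma measure_PiM_rank_ge_le:
  fixes T :: "'b measure" and W :: "'b \<Rightarrow> real"
  assumes T: "prob_space T" and W [measurable]: "W \<in> borel_measurable T" and k: "k \<le> n + 1"
  shows "(real n + 1) * measure (PiM {..n} (\<lambda>_. T))
      {\<omega> \<in> space (PiM {..n} (\<lambda>_. T)). k \<le> card {j. j < n \<and> W (\<omega> j) < W (\<omega> n)}} \<le> (real n + 1) - real k"
proof -
  define \<Omega> where "\<Omega> = PiM {..n} (\<lambda>_. T)"
  interpret \<Omega>: prob_space \<Omega> unfolding \<Omega>_def using T by (intro prob_space_PiM) auto
  define rank where "rank \<omega> i = card {j\<in>{..n}. W (\<omega> j) < W (\<omega> i)}" for \<omega> :: "nat \<Rightarrow> 'b" and i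
  define E where "E i = {\<omega> \<in> space \<Omega>. k \<le> rank \<omega> i}" for i
  have [measurable]: "(\<lambda>\<omega>. W (\<omega> j)) \<in> borel_measurable \<Omega>" if "j \<le> n" for j
    unfolding \<Omega>_def by (rule measurable_compose[OF measurable_component_singleton[of j] W]) (use that in auto)
  have E_sets: "E i \<in> sets \<Omega>" if "i \<le> n" for i
  proof -
    have "(\<lambda>\<omega>. real (rank \<omega> i)) \<in> borel_measurable \<Omega>"
      unfolding rank_def using that by (intro borel_measurable_card_Collect) auto
    then have "{\<omega> \<in> space \<Omega>. real k \<le> real (rank \<omega> i)} \<in> sets \<Omega>" by measurable
    then show ?thesis by (simp add: E_def)
  qed
  have E_eq: "measure \<Omega> (E i) = measure \<Omega> (E n)" if "i \<le> n" for i
  proof -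
    define \<sigma> where "\<sigma> l = (if l = i then n else if l = n then i else l)" for l
    define swap where "swap \<omega> = (\<lambda>l\<in>{..n}. \<omega> (\<sigma> l))" for \<omega> :: "nat \<Rightarrow> 'b"
    have \<sigma>_invol: "\<sigma> (\<sigma> l) = l" and \<sigma>_le: "\<sigma> l \<le> n \<longleftrightarrow> l \<le> n" for l
      using that by (auto simp: \<sigma>_def)
    have \<sigma>: "inj_on \<sigma> {..n}" "\<sigma> \<in> {..n} \<rightarrow> {..n}"
      using \<sigma>_invol \<sigma>_le by (metis inj_on_inverseI, auto)
    have swap_meas: "swap \<in> measurable \<Omega> \<Omega>"
      unfolding swap_def \<Omega>_def using \<sigma>(2)
      by (intro measurable_restrict measurable_component_singleton) auto
    have swap_distr: "distr \<Omega> \<Omega> swap = \<Omega>"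
      using distr_PiM_reindex[of "{..n}" "\<lambda>_. T" \<sigma> "{..n}", OF _ \<sigma>(1,2)] T
      by (simp add: \<Omega>_def swap_def[abs_def])
    have "rank (swap \<omega>) n = rank \<omega> i" for \<omega>
    proof -
      have "{j\<in>{..n}. W (swap \<omega> j) < W (swap \<omega> n)} = {j\<in>{..n}. W (\<omega> (\<sigma> j)) < W (\<omega> i)}"
        by (auto simp: swap_def \<sigma>_def[of n])
      moreover have "bij_betw \<sigma> {j\<in>{..n}. W (\<omega> (\<sigma> j)) < W (\<omega> i)} {j\<in>{..n}. W (\<omega> j) < W (\<omega> i)}"
        by (rule bij_betw_byWitness[where f' = \<sigma>]) (auto simp: \<sigma>_invol \<sigma>_le)
      ultimately show ?thesis
        unfolding rank_def by (simp add: bij_betw_same_card)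
    qed
    then have "swap -` E n \<inter> space \<Omega> = E i"
      using measurable_space[OF swap_meas] by (auto simp: E_def)
    moreover have "measure \<Omega> (E n) = measure \<Omega> (swap -` E n \<inter> space \<Omega>)"
      using measure_distr[OF swap_meas E_sets[of n]] by (simp only: swap_distr order_refl)
    ultimately show ?thesis by simp
  qed
  have "(\<Sum>i\<le>n. measure \<Omega> (E i)) = (\<Sum>i\<le>n. measure \<Omega> (E n))"
    by (intro sum.cong refl E_eq) simp
  then have "(real n + 1) * measure \<Omega> (E n) = (\<Sum>i\<le>n. measure \<Omega> (E i))"
    by simp
  also have "\<dots> = (\<Sum>i\<le>n. (\<integral>\<omega>. indicator (E i) \<omega> \<partial>\<Omega>))"
    by (intro sum.cong refl integral_indicator[symmetric] E_sets \<Omega>.emeasure_finite)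
      (auto simp: E_def intro!: arg_cong[where f = "measure \<Omega>"])
  also have "\<dots> = (\<integral>\<omega>. (\<Sum>i\<le>n. indicator (E i) \<omega>) \<partial>\<Omega>)"
    by (intro Bochner_Integration.integral_sum[symmetric] integrable_real_indicator E_sets)
      (auto simp: less_top[symmetric])
  also have "\<dots> \<le> (\<integral>\<omega>. (real n + 1) - real k \<partial>\<Omega>)"
  proof (rule integral_mono)
    show "integrable \<Omega> (\<lambda>\<omega>. \<Sum>i\<le>n. indicator (E i) \<omega> :: real)"
      by (intro Bochner_Integration.integrable_sum integrable_real_indicator E_sets)
      (auto simp: less_top[symmetric])
    fix \<omega> assume "\<omega> \<in> space \<Omega>"
    then have "(\<Sum>i\<le>n. indicator (E i) \<omega> :: real) = real (card {i\<in>{..n}. k \<le> rank \<omega> i})"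
      by (simp add: indicator_def E_def Int_def)
    also have "\<dots> \<le> (real n + 1) - real k"
      using card_rank_ge_add_le[of "{..n}" k "\<lambda>j. W (\<omega> j)"] k unfolding rank_def by simp
    finally show "(\<Sum>i\<le>n. indicator (E i) \<omega> :: real) \<le> (real n + 1) - real k" .
  qed simp
  also have "\<dots> = (real n + 1) - real k"
    by (simp add: \<Omega>.prob_space)
  finally have "(real n + 1) * measure \<Omega> (E n) \<le> (real n + 1) - real k" .
  moreover have "{j\<in>{..n}. W (\<omega> j) < W (\<omega> n)} = {j. j < n \<and> W (\<omega> j) < W (\<omega> n)}" for \<omega>
    by (auto simp: le_less)
  ultimately show ?thesis
    by (simp add: E_def rank_def \<Omega>_def)
qed

lemma pred_le_conf_quantile:
  assumes Z [measurable]: "Z \<in> borel_measurable M"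
    and V: "\<And>i. i < n \<Longrightarrow> (\<lambda>\<omega>. V \<omega> i) \<in> borel_measurable M" and "\<alpha> < 1"
  shows "Measurable.pred M (\<lambda>\<omega>. ereal (Z \<omega>) \<le> conf_quantile n \<alpha> (V \<omega>))"
proof -
  define k where "k = nat \<lceil>(real n + 1) * (1 - \<alpha>)\<rceil>"
  show ?thesis
  proof (cases "k \<le> n")
    case True
    have "(\<lambda>\<omega>. real (card {j\<in>{..<n}. V \<omega> j < Z \<omega>})) \<in> borel_measurable M"
    proof (intro borel_measurable_card_Collect)
      fix j assume "j \<in> {..<n}"
      with V have [measurable]: "(\<lambda>\<omega>. V \<omega> j) \<in> borel_measurable M" by simp
      show "Measurable.pred M (\<lambda>\<omega>. V \<omega> j < Z \<omega>)" by measurable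
    qed simp
    then have "Measurable.pred M (\<lambda>\<omega>. real (card {j\<in>{..<n}. V \<omega> j < Z \<omega>}) < real k)"
      by measurable
    moreover have "{j\<in>{..<n}. V \<omega> j < Z \<omega>} = {j. j < n \<and> V \<omega> j < Z \<omega>}" for \<omega>
      by auto
    ultimately show ?thesis
      using le_conf_quantile_iff[OF k_def True \<open>\<alpha> < 1\<close>] by (simp only: of_nat_less_iff)
  next
    case False
    then show ?thesis
      using conf_quantile_eq_infinity[OF k_def] by simp
  qed
qed

lemma conformal_coverage:
  fixes T :: "'b measure" and W :: "'b \<Rightarrow> real"
  assumes T: "prob_space T" and W [measurable]: "W \<in> borel_measurable T" and \<alpha>: "0 \<le> \<alpha>" "\<alpha> < 1"
  shows "1 - \<alpha> \<le> measure (PiM {..n} (\<lambda>_. T))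
      {\<omega> \<in> space (PiM {..n} (\<lambda>_. T)). ereal (W (\<omega> n)) \<le> conf_quantile n \<alpha> (\<lambda>i. W (\<omega> i))}"
proof -
  define \<Omega> where "\<Omega> = PiM {..n} (\<lambda>_. T)"
  define k where "k = nat \<lceil>(real n + 1) * (1 - \<alpha>)\<rceil>"
  interpret \<Omega>: prob_space \<Omega> unfolding \<Omega>_def using T by (intro prob_space_PiM) auto
  show ?thesis
  proof (cases "k \<le> n")
    case False
    have "conf_quantile n \<alpha> V = \<infinity>" for V
      using False by (intro conf_quantile_eq_infinity[OF k_def]) simp
    then show ?thesis
      using \<alpha>(1) \<Omega>.prob_space unfolding \<Omega>_def by simp
  next
    case True
    define E where "E = {\<omega> \<in> space \<Omega>. ereal (W (\<omega> n)) \<le> conf_quantile n \<alpha> (\<lambda>i. W (\<omega> i))}"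
    define B where "B = {\<omega> \<in> space \<Omega>. k \<le> card {j. j < n \<and> W (\<omega> j) < W (\<omega> n)}}"
    have "E \<in> sets \<Omega>"
      unfolding E_def \<Omega>_def using \<alpha>(2) by (intro pred_le_conf_quantile[THEN predE]) measurable
    moreover have "B = space \<Omega> - E"
      using le_conf_quantile_iff[OF k_def True \<alpha>(2)] by (auto simp: E_def B_def not_le)
    ultimately have "measure \<Omega> B = 1 - measure \<Omega> E"
      by (simp add: \<Omega>.prob_compl)
    moreover have "(real n + 1) * measure \<Omega> B \<le> (real n + 1) - real k"
      using measure_PiM_rank_ge_le[OF T W, of k n] True by (simp add: B_def \<Omega>_def)
    ultimately have "(real n + 1) * (1 - measure \<Omega> E) \<le> (real n + 1) - real k"
      by (simp only:)
    then have k_le: "real k \<le> (real n + 1) * measure \<Omega> E"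
      unfolding right_diff_distrib mult_1_right by linarith
    have "(real n + 1) * (1 - \<alpha>) \<le> real k"
      unfolding k_def by linarith
    then have "(real n + 1) * (1 - \<alpha>) \<le> (real n + 1) * measure \<Omega> E"
      using k_le by linarith
    then show ?thesis
      by (simp add: E_def \<Omega>_def mult_le_cancel_left_pos)
  qed
qed

section \<open>Conditioning on one coordinate of a product measure\<close>

lemma AE_PiM_insert_section:
  assumes T: "prob_space T" and AE: "AE \<omega> in PiM (insert i I) (\<lambda>_. T). P \<omega>"
  shows "AE \<omega>' in PiM I (\<lambda>_. T). AE t in T. P (\<omega>'(i := t))"
proof -
  interpret T: prob_space T by (rule T)
  interpret PI: prob_space "PiM I (\<lambda>_. T)" using T by (intro prob_space_PiM) auto
  interpret TI: pair_sigma_finite T "PiM I (\<lambda>_. T)" by unfold_locales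
  interpret IT: pair_sigma_finite "PiM I (\<lambda>_. T)" T by unfold_locales
  have upd_meas: "(\<lambda>(t, \<omega>'). \<omega>'(i := t)) \<in> measurable (T \<Otimes>\<^sub>M PiM I (\<lambda>_. T)) (PiM (insert i I) (\<lambda>_. T))"
    using measurable_compose[OF measurable_pair_swap' measurable_add_dim] by (simp add: case_prod_beta)
  have "distr (T \<Otimes>\<^sub>M PiM I (\<lambda>_. T)) (PiM (insert i I) (\<lambda>_. T)) (\<lambda>(t, \<omega>'). \<omega>'(i := t))
      = PiM (insert i I) (\<lambda>_. T)"
    using distr_pair_PiM_eq_PiM[of I "\<lambda>_. T" i] T by simp
  with AE have "AE \<omega> in distr (T \<Otimes>\<^sub>M PiM I (\<lambda>_. T)) (PiM (insert i I) (\<lambda>_. T)) (\<lambda>(t, \<omega>'). \<omega>'(i := t)). P \<omega>"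
    by (simp only:)
  from AE_distrD[OF upd_meas this]
  have "AE (t, \<omega>') in T \<Otimes>\<^sub>M PiM I (\<lambda>_. T). P (\<omega>'(i := t))"
    by (simp add: case_prod_beta)
  then have "AE x in distr (PiM I (\<lambda>_. T) \<Otimes>\<^sub>M T) (T \<Otimes>\<^sub>M PiM I (\<lambda>_. T)) (\<lambda>(\<omega>', t). (t, \<omega>')).
      case x of (t, \<omega>') \<Rightarrow> P (\<omega>'(i := t))"
    unfolding TI.distr_pair_swap[symmetric] .
  from AE_distrD[OF measurable_pair_swap' this]
  have "AE (\<omega>', t) in PiM I (\<lambda>_. T) \<Otimes>\<^sub>M T. P (\<omega>'(i := t))"
    by (simp add: case_prod_beta)
  from IT.AE_pair[OF this] show ?thesis
    by simp
qed

lemma measure_PiM_insert_mono: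
  assumes T: "prob_space T" and I: "finite I" "i \<notin> I"
    and A: "A \<in> sets (PiM (insert i I) (\<lambda>_. T))" and B: "B \<in> sets (PiM (insert i I) (\<lambda>_. T))"
    and AE: "AE \<omega>' in PiM I (\<lambda>_. T).
      (\<integral>\<^sup>+t. indicator A (\<omega>'(i := t)) \<partial>T) \<le> (\<integral>\<^sup>+t. indicator B (\<omega>'(i := t)) \<partial>T)"
  shows "measure (PiM (insert i I) (\<lambda>_. T)) A \<le> measure (PiM (insert i I) (\<lambda>_. T)) B"
proof -
  interpret product_sigma_finite "\<lambda>_. T"
    using T by (intro product_sigma_finite.intro prob_space_imp_sigma_finite)
  interpret prob_space "PiM (insert i I) (\<lambda>_. T)" using T by (intro prob_space_PiM) auto
  have "emeasure (PiM (insert i I) (\<lambda>_. T)) A = (\<integral>\<^sup>+\<omega>'. (\<integral>\<^sup>+t. indicator A (\<omega>'(i := t)) \<partial>T) \<partial>PiM I (\<lambda>_. T))"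
    using A by (simp add: product_nn_integral_insert[OF I, symmetric])
  also have "\<dots> \<le> (\<integral>\<^sup>+\<omega>'. (\<integral>\<^sup>+t. indicator B (\<omega>'(i := t)) \<partial>T) \<partial>PiM I (\<lambda>_. T))"
    by (rule nn_integral_mono_AE[OF AE])
  also have "\<dots> = emeasure (PiM (insert i I) (\<lambda>_. T)) B"
    using B by (simp add: product_nn_integral_insert[OF I, symmetric])
  finally show ?thesis by (simp add: emeasure_eq_measure)
qed

section \<open>The noisy-label model\<close>

lemma prob_space_unifU: "prob_space unifU"
  unfolding unifU_def by (rule prob_space_uniform_measure) auto

lemma sets_unifU [measurable_cong]: "sets unifU = sets borel"
  by (simp add: unifU_def)

lemma space_unifU [simp]: "space unifU = UNIV"
  by (simp add: unifU_def)

lemma sets_XY_law [measurable_cong]: "sets (XY_law mu f) = sets (mu \<Otimes>\<^sub>M borel)"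
  unfolding XY_law_def by (auto intro!: sets_pair_measure_cong)

lemma sets_triple_law [measurable_cong]: "sets (triple_law mu f) = sets ((mu \<Otimes>\<^sub>M borel) \<Otimes>\<^sub>M borel)"
  unfolding triple_law_def by (intro sets_pair_measure_cong sets_XY_law sets_unifU)

lemma nn_integral_triple_law:
  fixes F :: "('a \<times> real) \<times> real \<Rightarrow> ennreal"
  assumes [measurable]: "(\<lambda>(x, y). f x y) \<in> borel_measurable (mu \<Otimes>\<^sub>M borel)"
    "F \<in> borel_measurable ((mu \<Otimes>\<^sub>M borel) \<Otimes>\<^sub>M borel)"
  shows "(\<integral>\<^sup>+t. F t \<partial>triple_law mu f)
    = (\<integral>\<^sup>+x. (\<integral>\<^sup>+y. ennreal (f x y) * (\<integral>\<^sup>+u. F ((x, y), u) \<partial>unifU) \<partial>lborel) \<partial>mu)"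
proof -
  interpret U: prob_space unifU by (rule prob_space_unifU)
  have "(\<integral>\<^sup>+t. F t \<partial>triple_law mu f) = (\<integral>\<^sup>+p. (\<integral>\<^sup>+u. F (p, u) \<partial>unifU) \<partial>XY_law mu f)"
    unfolding triple_law_def by (subst U.nn_integral_fst[symmetric]) (auto simp: case_prod_beta)
  also have "\<dots> = (\<integral>\<^sup>+p. ennreal (f (fst p) (snd p)) * (\<integral>\<^sup>+u. F (p, u) \<partial>unifU) \<partial>(mu \<Otimes>\<^sub>M lborel))"
    unfolding XY_law_def by (subst nn_integral_density) (auto simp: case_prod_beta)
  also have "\<dots> = (\<integral>\<^sup>+x. (\<integral>\<^sup>+y. ennreal (f x y) * (\<integral>\<^sup>+u. F ((x, y), u) \<partial>unifU) \<partial>lborel) \<partial>mu)"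
    by (subst lborel.nn_integral_fst[symmetric]) (auto simp: case_prod_beta)
  finally show ?thesis .
qed

lemma prob_space_triple_law:
  assumes "prob_space mu" and [measurable]: "(\<lambda>(x, y). f x y) \<in> borel_measurable (mu \<Otimes>\<^sub>M borel)"
    and f_int: "\<And>x. x \<in> space mu \<Longrightarrow> (\<integral>\<^sup>+y. ennreal (f x y) \<partial>lborel) = 1"
  shows "prob_space (triple_law mu f)"
proof (rule prob_spaceI)
  interpret mu: prob_space mu by fact
  interpret U: prob_space unifU by (rule prob_space_unifU)
  have "emeasure (triple_law mu f) (space (triple_law mu f)) = (\<integral>\<^sup>+t. 1 \<partial>triple_law mu f)"
    by simp
  also have "\<dots> = (\<integral>\<^sup>+x. (\<integral>\<^sup>+y. ennreal (f x y) \<partial>lborel) \<partial>mu)"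
    by (subst nn_integral_triple_law) (simp_all add: U.emeasure_space_1[simplified])
  also have "\<dots> = 1"
    using f_int mu.emeasure_space_1 by (simp cong: nn_integral_cong)
  finally show "emeasure (triple_law mu f) (space (triple_law mu f)) = 1" .
qed

lemma triple_law_noisy_label_le:
  assumes f_meas [measurable]: "(\<lambda>(x, y). f x y) \<in> borel_measurable (mu \<Otimes>\<^sub>M borel)"
    and f_int: "\<And>x. x \<in> space mu \<Longrightarrow> (\<integral>\<^sup>+y. ennreal (f x y) \<partial>lborel) = 1"
    and f_shape: "\<And>x. x \<in> space mu \<Longrightarrow> sym_unimodal (f x)"
    and h_meas [measurable]: "(\<lambda>(x, u). h x u) \<in> borel_measurable (mu \<Otimes>\<^sub>M borel)"
    and noise_sym: "\<And>x. x \<in> space mu \<Longrightarrow> distr unifU borel (h x) = distr unifU borel (\<lambda>u. - h x u)"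
    and C_meas [measurable]: "Measurable.pred (mu \<Otimes>\<^sub>M borel) (\<lambda>(x, y). y \<in> C x)"
    and C_interval: "\<And>x. x \<in> space mu \<Longrightarrow> is_interval (C x)"
    and C_median: "\<And>x t. x \<in> space mu \<Longrightarrow> is_median (noisy_cond_law f h x) t \<Longrightarrow> t \<in> C x"
  shows "(\<integral>\<^sup>+((x, y), u). indicator (C x) (y + h x u) \<partial>triple_law mu f)
    \<le> (\<integral>\<^sup>+((x, y), u). indicator (C x) y \<partial>triple_law mu f)"
proof -
  interpret U: prob_space unifU by (rule prob_space_unifU)
  have "(\<lambda>t. (fst (fst t), snd (fst t) + h (fst (fst t)) (snd t)))
      \<in> measurable ((mu \<Otimes>\<^sub>M borel) \<Otimes>\<^sub>M borel) (mu \<Otimes>\<^sub>M borel)"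
    by measurable
  from measurable_compose[OF this C_meas]
  have [measurable]: "Measurable.pred ((mu \<Otimes>\<^sub>M borel) \<Otimes>\<^sub>M borel)
      (\<lambda>t. snd (fst t) + h (fst (fst t)) (snd t) \<in> C (fst (fst t)))"
    by (simp add: case_prod_beta)
  then have noisy_meas: "(\<lambda>((x, y), u). indicator (C x) (y + h x u) :: ennreal)
      \<in> borel_measurable ((mu \<Otimes>\<^sub>M borel) \<Otimes>\<^sub>M borel)"
    unfolding indicator_def case_prod_beta by measurable
  have clean_meas: "(\<lambda>((x, y), u). indicator (C x) y :: ennreal)
      \<in> borel_measurable ((mu \<Otimes>\<^sub>M borel) \<Otimes>\<^sub>M borel)"
    unfolding indicator_def case_prod_beta by measurable
  have section_le: "(\<integral>\<^sup>+y. ennreal (f x y) * (\<integral>\<^sup>+u. indicator (C x) (y + h x u) \<partial>unifU) \<partial>lborel)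
      \<le> (\<integral>\<^sup>+y. ennreal (f x y) * indicator (C x) y \<partial>lborel)" if x: "x \<in> space mu" for x
  proof -
    obtain m where "\<And>t. f x (m + t) = f x (m - t)" "mono_on {..m} (f x)"
      using f_shape[OF x] unfolding sym_unimodal_def by blast
    moreover have "f x \<in> borel_measurable borel" "h x \<in> borel_measurable borel"
      using x by measurable
    moreover have C_sets: "C x \<in> sets borel"
      using measurable_Pair2[OF C_meas x] by (simp add: pred_def)
    ultimately interpret symmetric_unimodal_density "f x" m
      by unfold_locales
    have "m \<in> C x"
      using is_median_add_symmetric_noise[OF prob_space_unifU _ noise_sym[OF x] f_int[OF x]] x
      by (intro C_median) (auto simp: noisy_cond_law_def measurable_cong_sets[OF sets_unifU refl])
    then show ?thesis
      using nn_integral_add_symmetric_noise_le[OF prob_space_unifU _ noise_sym[OF x] C_sets C_interval[OF x]] x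
      by (auto simp: measurable_cong_sets[OF sets_unifU refl])
  qed
  have "(\<integral>\<^sup>+((x, y), u). indicator (C x) (y + h x u) \<partial>triple_law mu f)
      = (\<integral>\<^sup>+x. (\<integral>\<^sup>+y. ennreal (f x y) * (\<integral>\<^sup>+u. indicator (C x) (y + h x u) \<partial>unifU) \<partial>lborel) \<partial>mu)"
    by (subst nn_integral_triple_law[OF f_meas noisy_meas]) simp
  also have "\<dots> \<le> (\<integral>\<^sup>+x. (\<integral>\<^sup>+y. ennreal (f x y) * indicator (C x) y \<partial>lborel) \<partial>mu)"
    by (intro nn_integral_mono section_le)
  also have "\<dots> = (\<integral>\<^sup>+((x, y), u). indicator (C x) y \<partial>triple_law mu f)"
    by (subst nn_integral_triple_law[OF f_meas clean_meas]) (simp add: U.emeasure_space_1[simplified])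
  finally show ?thesis .
qed

definition noisy_score :: "('a \<Rightarrow> real \<Rightarrow> real) \<Rightarrow> ('a \<Rightarrow> real \<Rightarrow> real) \<Rightarrow> ('a \<times> real) \<times> real \<Rightarrow> real" where
  "noisy_score s h = (\<lambda>((x, y), u). s x (y + h x u))"

definition clean_score :: "('a \<Rightarrow> real \<Rightarrow> real) \<Rightarrow> ('a \<times> real) \<times> real \<Rightarrow> real" where
  "clean_score s = (\<lambda>((x, y), u). s x y)"

lemma borel_measurable_scores:
  assumes [measurable]: "(\<lambda>(x, u). h x u) \<in> borel_measurable (mu \<Otimes>\<^sub>M borel)"
    "(\<lambda>(x, y). s x y) \<in> borel_measurable (mu \<Otimes>\<^sub>M borel)"
  shows "noisy_score s h \<in> borel_measurable (triple_law mu f)"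
    and "clean_score s \<in> borel_measurable (triple_law mu f)"
proof -
  have [measurable]: "(\<lambda>t. s (fst (fst t)) (snd (fst t) + h (fst (fst t)) (snd t))) \<in> borel_measurable (triple_law mu f)"
    "(\<lambda>t. s (fst (fst t)) (snd (fst t))) \<in> borel_measurable (triple_law mu f)"
    by measurable
  then show "noisy_score s h \<in> borel_measurable (triple_law mu f)" "clean_score s \<in> borel_measurable (triple_law mu f)"
    by (simp_all add: noisy_score_def clean_score_def case_prod_beta')
qed

lemma q_noisy_eq_conf_quantile: "q_noisy n \<alpha> s h \<omega> = conf_quantile n \<alpha> (\<lambda>i. noisy_score s h (\<omega> i))"
  by (simp add: q_noisy_def noisy_score_def Xof_def Ytil_def Yof_def Uof_def case_prod_beta)

lemma C_noisy_test_iff: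
  "Ytil h \<omega> i \<in> C_noisy n \<alpha> s h \<omega> (Xof \<omega> i) \<longleftrightarrow> ereal (noisy_score s h (\<omega> i)) \<le> q_noisy n \<alpha> s h \<omega>"
  "Yof \<omega> i \<in> C_noisy n \<alpha> s h \<omega> (Xof \<omega> i) \<longleftrightarrow> ereal (clean_score s (\<omega> i)) \<le> q_noisy n \<alpha> s h \<omega>"
  by (simp_all add: C_noisy_def noisy_score_def clean_score_def Xof_def Ytil_def Yof_def Uof_def case_prod_beta)

lemma C_noisy_fun_upd_test: "C_noisy n \<alpha> s h (\<omega>'(n := t)) = C_noisy n \<alpha> s h \<omega>'"
proof -
  have "map (\<lambda>i. s (Xof (\<omega>'(n := t)) i) (Ytil h (\<omega>'(n := t)) i)) [0..<n]
      = map (\<lambda>i. s (Xof \<omega>' i) (Ytil h \<omega>' i)) [0..<n]"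
    by (simp add: Xof_def Ytil_def Yof_def Uof_def)
  then have "q_noisy n \<alpha> s h (\<omega>'(n := t)) = q_noisy n \<alpha> s h \<omega>'"
    unfolding q_noisy_def conf_quantile_def by (simp only:)
  then show ?thesis
    by (simp add: C_noisy_def fun_eq_iff)
qed

lemma data_law_eq_PiM_insert: "data_law n mu f = PiM (insert n {..<n}) (\<lambda>_. triple_law mu f)"
  by (simp add: data_law_def lessThan_Suc_atMost[symmetric] lessThan_Suc)

lemma sets_data_law_test_events:
  assumes [measurable]: "(\<lambda>(x, u). h x u) \<in> borel_measurable (mu \<Otimes>\<^sub>M borel)"
    "(\<lambda>(x, y). s x y) \<in> borel_measurable (mu \<Otimes>\<^sub>M borel)" and "\<alpha> < 1"
  shows "{\<omega> \<in> space (data_law n mu f). Ytil h \<omega> n \<in> C_noisy n \<alpha> s h \<omega> (Xof \<omega> n)} \<in> sets (data_law n mu f)"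
    and "{\<omega> \<in> space (data_law n mu f). Yof \<omega> n \<in> C_noisy n \<alpha> s h \<omega> (Xof \<omega> n)} \<in> sets (data_law n mu f)"
proof -
  have component: "(\<lambda>\<omega>. W (\<omega> i)) \<in> borel_measurable (data_law n mu f)"
    if "W \<in> borel_measurable (triple_law mu f)" "i \<le> n" for W i
    unfolding data_law_def using that by (intro measurable_compose[OF measurable_component_singleton[of i] that(1)]) auto
  show "{\<omega> \<in> space (data_law n mu f). Ytil h \<omega> n \<in> C_noisy n \<alpha> s h \<omega> (Xof \<omega> n)} \<in> sets (data_law n mu f)"
    "{\<omega> \<in> space (data_law n mu f). Yof \<omega> n \<in> C_noisy n \<alpha> s h \<omega> (Xof \<omega> n)} \<in> sets (data_law n mu f)"
    unfolding C_noisy_test_iff q_noisy_eq_conf_quantile using \<open>\<alpha> < 1\<close> borel_measurable_scores[OF assms(1,2)]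
    by (intro predE pred_le_conf_quantile component; simp)+
qed

lemma nn_integral_test_noisy_le_clean:
  assumes f_meas [measurable]: "(\<lambda>(x, y). f x y) \<in> borel_measurable (mu \<Otimes>\<^sub>M borel)"
    and f_int: "\<And>x. x \<in> space mu \<Longrightarrow> (\<integral>\<^sup>+y. ennreal (f x y) \<partial>lborel) = 1"
    and f_shape: "\<And>x. x \<in> space mu \<Longrightarrow> sym_unimodal (f x)"
    and h_meas [measurable]: "(\<lambda>(x, u). h x u) \<in> borel_measurable (mu \<Otimes>\<^sub>M borel)"
    and noise_sym: "\<And>x. x \<in> space mu \<Longrightarrow> distr unifU borel (h x) = distr unifU borel (\<lambda>u. - h x u)"
    and s_meas [measurable]: "(\<lambda>(x, y). s x y) \<in> borel_measurable (mu \<Otimes>\<^sub>M borel)"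
    and \<omega>': "\<omega>' \<in> space (PiM {..<n} (\<lambda>_. triple_law mu f))"
    and C: "\<forall>x \<in> space mu. is_interval (C_noisy n \<alpha> s h \<omega>' x) \<and>
      (\<forall>t. is_median (noisy_cond_law f h x) t \<longrightarrow> t \<in> C_noisy n \<alpha> s h \<omega>' x)"
  shows "(\<integral>\<^sup>+t. indicator {\<omega> \<in> space (data_law n mu f). Ytil h \<omega> n \<in> C_noisy n \<alpha> s h \<omega> (Xof \<omega> n)}
        (\<omega>'(n := t)) \<partial>triple_law mu f)
    \<le> (\<integral>\<^sup>+t. indicator {\<omega> \<in> space (data_law n mu f). Yof \<omega> n \<in> C_noisy n \<alpha> s h \<omega> (Xof \<omega> n)}
        (\<omega>'(n := t)) \<partial>triple_law mu f)"
proof -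
  have upd_space: "\<omega>'(n := t) \<in> space (data_law n mu f)" if "t \<in> space (triple_law mu f)" for t
    using \<omega>' that by (auto simp: data_law_eq_PiM_insert space_PiM intro!: PiE_fun_upd)
  have C_meas: "Measurable.pred (mu \<Otimes>\<^sub>M borel) (\<lambda>(x, y). y \<in> C_noisy n \<alpha> s h \<omega>' x)"
    by (simp add: C_noisy_def case_prod_beta)
  have "(\<integral>\<^sup>+t. indicator {\<omega> \<in> space (data_law n mu f). Ytil h \<omega> n \<in> C_noisy n \<alpha> s h \<omega> (Xof \<omega> n)}
        (\<omega>'(n := t)) \<partial>triple_law mu f)
      = (\<integral>\<^sup>+((x, y), u). indicator (C_noisy n \<alpha> s h \<omega>' x) (y + h x u) \<partial>triple_law mu f)"
    using upd_space by (intro nn_integral_cong)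
      (simp add: C_noisy_fun_upd_test Xof_def Ytil_def Yof_def Uof_def indicator_def case_prod_beta)
  also have "\<dots> \<le> (\<integral>\<^sup>+((x, y), u). indicator (C_noisy n \<alpha> s h \<omega>' x) y \<partial>triple_law mu f)"
    using C by (intro triple_law_noisy_label_le[OF f_meas f_int f_shape h_meas noise_sym C_meas]) auto
  also have "\<dots> = (\<integral>\<^sup>+t. indicator {\<omega> \<in> space (data_law n mu f). Yof \<omega> n \<in> C_noisy n \<alpha> s h \<omega> (Xof \<omega> n)}
        (\<omega>'(n := t)) \<partial>triple_law mu f)"
    using upd_space by (intro nn_integral_cong)
      (simp add: C_noisy_fun_upd_test Xof_def Yof_def indicator_def case_prod_beta)
  finally show ?thesis .
qed

lemma data_law_noisy_coverage_le:
  fixes mu :: "'a measure" and f h s :: "'a \<Rightarrow> real \<Rightarrow> real"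
  assumes mu: "prob_space mu" and \<alpha>: "\<alpha> < 1"
    and f_meas: "(\<lambda>(x, y). f x y) \<in> borel_measurable (mu \<Otimes>\<^sub>M borel)"
    and f_int: "\<And>x. x \<in> space mu \<Longrightarrow> (\<integral>\<^sup>+y. ennreal (f x y) \<partial>lborel) = 1"
    and f_shape: "\<And>x. x \<in> space mu \<Longrightarrow> sym_unimodal (f x)"
    and h_meas: "(\<lambda>(x, u). h x u) \<in> borel_measurable (mu \<Otimes>\<^sub>M borel)"
    and noise_sym: "\<And>x. x \<in> space mu \<Longrightarrow> distr unifU borel (h x) = distr unifU borel (\<lambda>u. - h x u)"
    and s_meas: "(\<lambda>(x, y). s x y) \<in> borel_measurable (mu \<Otimes>\<^sub>M borel)"
    and C_shape: "AE \<omega> in data_law n mu f. \<forall>x \<in> space mu. is_interval (C_noisy n \<alpha> s h \<omega> x) \<and>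
      (\<forall>t. is_median (noisy_cond_law f h x) t \<longrightarrow> t \<in> C_noisy n \<alpha> s h \<omega> x)"
  shows "measure (data_law n mu f) {\<omega> \<in> space (data_law n mu f). Ytil h \<omega> n \<in> C_noisy n \<alpha> s h \<omega> (Xof \<omega> n)}
    \<le> measure (data_law n mu f) {\<omega> \<in> space (data_law n mu f). Yof \<omega> n \<in> C_noisy n \<alpha> s h \<omega> (Xof \<omega> n)}"
proof -
  have T: "prob_space (triple_law mu f)"
    using mu f_meas f_int by (rule prob_space_triple_law)
  then interpret T: prob_space "triple_law mu f" .
  have "AE \<omega>' in PiM {..<n} (\<lambda>_. triple_law mu f). \<forall>x \<in> space mu. is_interval (C_noisy n \<alpha> s h \<omega>' x) \<and>
      (\<forall>t. is_median (noisy_cond_law f h x) t \<longrightarrow> t \<in> C_noisy n \<alpha> s h \<omega>' x)"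
    using AE_PiM_insert_section[OF T C_shape[unfolded data_law_eq_PiM_insert]] by (simp add: C_noisy_fun_upd_test)
  then have "AE \<omega>' in PiM {..<n} (\<lambda>_. triple_law mu f).
      (\<integral>\<^sup>+t. indicator {\<omega> \<in> space (data_law n mu f). Ytil h \<omega> n \<in> C_noisy n \<alpha> s h \<omega> (Xof \<omega> n)}
        (\<omega>'(n := t)) \<partial>triple_law mu f)
    \<le> (\<integral>\<^sup>+t. indicator {\<omega> \<in> space (data_law n mu f). Yof \<omega> n \<in> C_noisy n \<alpha> s h \<omega> (Xof \<omega> n)}
        (\<omega>'(n := t)) \<partial>triple_law mu f)"
    by (rule AE_mp, intro AE_I2 impI nn_integral_test_noisy_le_clean[OF f_meas f_int f_shape h_meas noise_sym s_meas])
  then show ?thesis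
    using sets_data_law_test_events[OF h_meas s_meas \<alpha>]
    unfolding data_law_eq_PiM_insert by (intro measure_PiM_insert_mono[OF T]) auto
qed


theorem mainTheorem2:
  fixes mu :: "'a measure"
    and f :: "'a \<Rightarrow> real \<Rightarrow> real"
    and h :: "'a \<Rightarrow> real \<Rightarrow> real"
    and s :: "'a \<Rightarrow> real \<Rightarrow> real"
    and n :: nat and \<alpha> :: real
  assumes alpha: "0 < \<alpha>" "\<alpha> < 1"
    and mu: "prob_space mu"
    and f_meas: "(\<lambda>(x,y). f x y) \<in> borel_measurable (mu \<Otimes>\<^sub>M borel)"
    and f_nonneg: "\<And>x y. x \<in> space mu \<Longrightarrow> 0 \<le> f x y"
    and f_int: "\<And>x. x \<in> space mu \<Longrightarrow> (\<integral>\<^sup>+ y. ennreal (f x y) \<partial>lborel) = 1"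
    and f_shape: "\<And>x. x \<in> space mu \<Longrightarrow> sym_unimodal (f x)"
    and h_meas: "(\<lambda>(x,u). h x u) \<in> borel_measurable (mu \<Otimes>\<^sub>M borel)"
    and noise_sym: "\<And>x. x \<in> space mu \<Longrightarrow>
                      distr unifU borel (h x) = distr unifU borel (\<lambda>u. - h x u)"
    and s_meas: "(\<lambda>(x,y). s x y) \<in> borel_measurable (mu \<Otimes>\<^sub>M borel)"
    and C_shape: "AE \<omega> in data_law n mu f. \<forall>x \<in> space mu.
                    is_interval (C_noisy n \<alpha> s h \<omega> x) \<and>
                    (\<forall>t. is_median (noisy_cond_law f h x) t \<longrightarrow> t \<in> C_noisy n \<alpha> s h \<omega> x)"
  shows "measure (data_law n mu f)
           {\<omega> \<in> space (data_law n mu f). Yof \<omega> n \<in> C_noisy n \<alpha> s h \<omega> (Xof \<omega> n)} \<ge> 1 - \<alpha>"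
proof -
  have "prob_space (triple_law mu f)"
    using mu f_meas f_int by (rule prob_space_triple_law)
  then have "1 - \<alpha> \<le> measure (PiM {..n} (\<lambda>_. triple_law mu f)) {\<omega> \<in> space (PiM {..n} (\<lambda>_. triple_law mu f)).
      ereal (noisy_score s h (\<omega> n)) \<le> conf_quantile n \<alpha> (\<lambda>i. noisy_score s h (\<omega> i))}"
    using alpha borel_measurable_scores(1)[OF h_meas s_meas] by (intro conformal_coverage) auto
  also have "\<dots> = measure (data_law n mu f)
      {\<omega> \<in> space (data_law n mu f). Ytil h \<omega> n \<in> C_noisy n \<alpha> s h \<omega> (Xof \<omega> n)}"
    by (simp add: data_law_def C_noisy_test_iff q_noisy_eq_conf_quantile)
  also have "\<dots> \<le> measure (data_law n mu f)
      {\<omega> \<in> space (data_law n mu f). Yof \<omega> n \<in> C_noisy n \<alpha> s h \<omega> (Xof \<omega> n)}"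
    by (rule data_law_noisy_coverage_le[OF mu alpha(2) f_meas f_int f_shape h_meas noise_sym s_meas C_shape])
  finally show ?thesis .
qed

end
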